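(* Let $h\ge1$ and $r\ge1$ be natural numbers and let $k_1,\dots,k_r$ be natural numbers with $1\le k_i\le h$. Then there exists a word $A\in\mathsf{W}^N_3$ such that $\mathbf{u}(A)=(K_{h,k_1},\dots,K_{h,k_r})$.
   Context: Words are finite strings over $\mathbb{N}$; $\Lambda$ is the empty word, juxtaposition is concatenation, $A^s$ is $A$ repeated $s$ times. For $k\in\mathbb{N}$, $\mathsf{S}_k$ is the set of words all of whose symbols are $\ge k$; $\mathsf{W}_3$ is the set of words with all symbols $\le3$. Given a linear preorder $\precsim$ with $A\sim B$ iff $A\precsim B\wedge B\precsim A$ and $A\prec B$ iff $A\precsim B\wedge\neg B\precsim A$, a finite sequence $(A_1,\dots,A_p)$ is lexicographically not greater than $(B_1,\dots,B_q)$ iff either $p\le q$ and $A_i\sim B_i$ for all $i\le p$, or there is $s<\min(p,q)$ with $A_i\sim B_i$ for $i\le s$ and $A_{s+1}\prec B_{s+1}$. A lexicographically maximal subsequence of a finite sequence is a subsequence that is lexicographically not less than every subsequence. The linear preorder $\precsim$ on words is defined by recursion on (largest symbol of $AB$) $-$ (smallest symbol of $AB$): $\Lambda\precsim\Lambda$; if $AB$ is nonempty with minimal symbol $n$, write uniquely $A=A_1n\cdots nA_k$, $B=B_1n\cdots nB_l$ ($k,l\ge1$) with $A_i,B_j\in\mathsf{S}_{n+1}$ (possibly empty); let $C,D$ be lexicographically maximal subsequences of $(A_1,\dots,A_k)$, $(B_1,\dots,B_l)$; then $A\precsim B$ iff $C$ is lexicographically not greater than $D$. The set $\mathsf{NF}$: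 $\Lambda\in\mathsf{NF}$; a word with minimal symbol $n$, written $A_1n\cdots nA_k$ with $k\ge2$, $A_i\in\mathsf{S}_{n+1}$, is in $\mathsf{NF}$ iff $A_k\precsim\dots\precsim A_1$ and all $A_i\in\mathsf{NF}$. Every word is equivalent to exactly one word of $\mathsf{NF}$. For $A\in\mathsf{NF}$, $\Diamond_nA$ is the unique word of $\mathsf{NF}$ equivalent to $An$. $\mathsf{W}^N_3=\mathsf{W}_3\cap\mathsf{NF}$. Let $I_s=3^s2$; for $1\le k\le h$ let $K_{h,k}=I_{h-1}I_{h-2}\cdots I_{k+1}I_k3^k$. For $A\in\mathsf{W}^N_3$ written as $A=A_r0A_{r-1}0\cdots0A_1$ with all $A_i\in\mathsf{S}_1\cap\mathsf{W}^N_3$, put $\mathbf{u}(A)=(u_1(A),\dots,u_r(A))$ where $u_i(A)=\Diamond_3(A_r0A_{r-1}0\cdots0A_i)$. *)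

theory Defs
  imports Main
begin

(* Words are nat lists; [] is the empty word Lambda. *)

primrec splitn :: "nat \<Rightarrow> nat list \<Rightarrow> nat list list" where
  "splitn n [] = [[]]"
| "splitn n (x # xs) =
     (if x = n then [] # splitn n xs
      else (x # hd (splitn n xs)) # tl (splitn n xs))"

fun joinw :: "nat \<Rightarrow> nat list list \<Rightarrow> nat list" where
  "joinw n [] = []"
| "joinw n [p] = p"
| "joinw n (p # q # ps) = p @ n # joinw n (q # ps)"

definition pequiv :: "('a \<Rightarrow> 'a \<Rightarrow> bool) \<Rightarrow> 'a \<Rightarrow> 'a \<Rightarrow> bool" where
  "pequiv R a b \<longleftrightarrow> R a b \<and> R b a"

definition pless :: "('a \<Rightarrow> 'a \<Rightarrow> bool) \<Rightarrow> 'a \<Rightarrow> 'a \<Rightarrow> bool" where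
  "pless R a b \<longleftrightarrow> R a b \<and> \<not> R b a"

definition lexle :: "('a \<Rightarrow> 'a \<Rightarrow> bool) \<Rightarrow> 'a list \<Rightarrow> 'a list \<Rightarrow> bool" where
  "lexle R xs ys \<longleftrightarrow>
     (length xs \<le> length ys \<and> (\<forall>i < length xs. pequiv R (xs ! i) (ys ! i)))
   \<or> (\<exists>s < min (length xs) (length ys).
        (\<forall>i < s. pequiv R (xs ! i) (ys ! i)) \<and> pless R (xs ! s) (ys ! s))"

(* a lexicographically maximal subsequence (chosen by Hilbert choice; all choices are
   pairwise equivalent, so the relation below does not depend on the choice) *)
definition lexmax :: "('a \<Rightarrow> 'a \<Rightarrow> bool) \<Rightarrow> 'a list \<Rightarrow> 'a list" where
  "lexmax R xs = (SOME C. C \<in> set (subseqs xs) \<and> (\<forall>D \<in> set (subseqs xs). lexle R D C))"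

(* The preorder, by recursion on a fuel bounding (max symbol - min symbol) of AB *)
primrec prec_aux :: "nat \<Rightarrow> nat list \<Rightarrow> nat list \<Rightarrow> bool" where
  "prec_aux 0 = (\<lambda>A B. True)"
| "prec_aux (Suc d) = (\<lambda>A B.
     if A @ B = [] then True
     else (let n = Min (set (A @ B))
           in lexle (prec_aux d) (lexmax (prec_aux d) (splitn n A))
                                 (lexmax (prec_aux d) (splitn n B))))"

definition prec :: "nat list \<Rightarrow> nat list \<Rightarrow> bool" where
  "prec A B = prec_aux (Suc (Max (set (A @ B)) - Min (set (A @ B)))) A B"

definition wequiv :: "nat list \<Rightarrow> nat list \<Rightarrow> bool" where
  "wequiv A B \<longleftrightarrow> prec A B \<and> prec B A"

inductive_set NF :: "nat list set" where
  NF_empty: "[] \<in> NF"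
| NF_step: "A \<noteq> [] \<Longrightarrow>
     (\<forall>i. Suc i < length (splitn (Min (set A)) A) \<longrightarrow>
          prec (splitn (Min (set A)) A ! Suc i) (splitn (Min (set A)) A ! i)) \<Longrightarrow>
     (\<forall>p \<in> set (splitn (Min (set A)) A). p \<in> NF) \<Longrightarrow> A \<in> NF"

definition diamond :: "nat \<Rightarrow> nat list \<Rightarrow> nat list" where
  "diamond n A = (THE B. B \<in> NF \<and> wequiv B (A @ [n]))"

definition W3 :: "nat list set" where
  "W3 = {A. \<forall>x \<in> set A. x \<le> 3}"

definition W3N :: "nat list set" where
  "W3N = W3 \<inter> NF"

definition Iw :: "nat \<Rightarrow> nat list" where
  "Iw s = replicate s 3 @ [2]"

definition Kw :: "nat \<Rightarrow> nat \<Rightarrow> nat list" where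
  "Kw h k = concat (map Iw (rev [k..<h])) @ replicate k 3"

(* u(A) = (u_1(A),...,u_r(A)) where A = A_r 0 ... 0 A_1 and
   u_i(A) = diamond 3 (A_r 0 ... 0 A_i) *)
definition uvec :: "nat list \<Rightarrow> nat list list" where
  "uvec A = (let ps = splitn 0 A; r = length ps
             in map (\<lambda>i. diamond 3 (joinw 0 (take (r - i + 1) ps))) [1..<r+1])"

end

theory Submission
  imports Defs
begin

text \<open>Let \<open>m\<close> be the least of the \<open>k_i\<close>. The word is \<open>A = A_r 0 \<cdots> 0 A_1\<close> with
  \<open>A_i = P_i 1 Q_(k_i)\<close>, where \<open>P_j = I_(h-1) \<cdots> I_m 3^(m-1) (2 3^(m-1))^j\<close> and \<open>Q_k\<close> is
  \<open>K_(h,k)\<close> without its last letter. A word \<open>3^e_1 2 \<cdots> 2 3^e_p\<close> with nonincreasing exponents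
  is a normal form, and two such words compare like their exponent sequences do
  lexicographically. Hence \<open>Q_k \<preceq> P_j \<prec> P_(j+1) \<prec> K_(h,k)\<close> for \<open>m \<le> k\<close>, which makes every
  \<open>A_i\<close> and then \<open>A\<close> a normal form. In \<open>A_r 0 \<cdots> 0 A_i 3\<close> the last 0-piece
  \<open>A_i 3 = P_i 1 K_(h,k_i)\<close> strictly dominates the others and its maximal 1-piece is
  \<open>K_(h,k_i)\<close>, so the word is equivalent to the normal form \<open>K_(h,k_i)\<close>, which is therefore
  \<open>u_i(A)\<close>.\<close>

section \<open>Splitting and joining words\<close>

lemma splitn_not_Nil: "splitn n xs \<noteq> []"
  by (induct xs) auto

lemma joinw_Cons_Cons: "joinw n ((x # p) # ps) = x # joinw n (p # ps)"
  by (cases ps) auto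

lemma joinw_Cons: "ps \<noteq> [] \<Longrightarrow> joinw n (p # ps) = p @ n # joinw n ps"
  by (cases ps) auto

lemma joinw_splitn: "joinw n (splitn n xs) = xs"
proof (induct xs)
  case (Cons x xs)
  have "splitn n xs = hd (splitn n xs) # tl (splitn n xs)"
    using splitn_not_Nil by simp
  then show ?case
    using Cons splitn_not_Nil joinw_Cons[of "splitn n xs" n "[]"]
    by (cases "x = n") (auto simp: joinw_Cons_Cons)
qed simp

lemma splitn_no_sep: "n \<notin> set xs \<Longrightarrow> splitn n xs = [xs]"
  by (induct xs) auto

lemma splitn_append_sep: "n \<notin> set p \<Longrightarrow> splitn n (p @ n # ys) = p # splitn n ys"
  by (induct p) auto

lemma splitn_joinw: "ps \<noteq> [] \<Longrightarrow> \<forall>p\<in>set ps. n \<notin> set p \<Longrightarrow> splitn n (joinw n ps) = ps"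
proof (induct ps)
  case (Cons p ps)
  then show ?case
    by (cases ps) (simp_all add: splitn_no_sep splitn_append_sep)
qed simp

lemma splitn_piece:
  "p \<in> set (splitn n xs) \<Longrightarrow> n \<notin> set p \<and> set p \<subseteq> set xs"
proof (induct xs arbitrary: p)
  case (Cons x xs)
  have "hd (splitn n xs) \<in> set (splitn n xs)" "set (tl (splitn n xs)) \<subseteq> set (splitn n xs)"
    using splitn_not_Nil by (simp_all add: list.set_sel(2) subsetI)
  with Cons show ?case
    by (cases "x = n") fastforce+
qed simp

lemma length_splitn_piece:
  "p \<in> set (splitn n xs) \<Longrightarrow> length p \<le> length xs \<and> (n \<in> set xs \<longrightarrow> length p < length xs)"
proof (induct xs arbitrary: p)
  case (Cons x xs)
  have "hd (splitn n xs) \<in> set (splitn n xs)" "set (tl (splitn n xs)) \<subseteq> set (splitn n xs)"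
    using splitn_not_Nil by (simp_all add: list.set_sel(2) subsetI)
  with Cons show ?case
    by (cases "x = n") fastforce+
qed simp

lemma length_splitn_ge_2: "n \<in> set xs \<Longrightarrow> 2 \<le> length (splitn n xs)"
proof (induct xs)
  case (Cons x xs)
  have "length ((x # hd (splitn n xs)) # tl (splitn n xs)) = length (splitn n xs)"
    using splitn_not_Nil[of n xs] by (cases "splitn n xs") auto
  moreover have "1 \<le> length (splitn n xs)"
    using splitn_not_Nil[of n xs] by (cases "splitn n xs") auto
  ultimately show ?case
    using Cons by (cases "x = n") auto
qed simp

lemma set_joinw: "set (joinw n ps) \<subseteq> \<Union>(set ` set ps) \<union> {n}"
  by (induct n ps rule: joinw.induct) auto

lemma joinw_map_snoc: "joinw n (map f xs @ [y]) = concat (map (\<lambda>x. f x @ [n]) xs) @ y"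
  by (induct xs) (auto simp: joinw_Cons)

lemma joinw_snoc_append: "joinw n (xs @ [y]) @ z = joinw n (xs @ [y @ z])"
  by (induct n xs rule: joinw.induct) (auto simp: joinw_Cons)

section \<open>Lexicographic comparison of sequences\<close>

lemma lexle_Nil [simp]: "lexle R [] ys"
  by (simp add: lexle_def)

lemma lexle_Cons_Nil [simp]: "\<not> lexle R (x # xs) []"
  by (simp add: lexle_def)

lemma lexle_Cons_Cons [simp]:
  "lexle R (x # xs) (y # ys) \<longleftrightarrow> pless R x y \<or> (pequiv R x y \<and> lexle R xs ys)"
  unfolding lexle_def
  by (simp add: All_less_Suc2 Ex_less_Suc2 conj_disj_distribL ex_disj_distrib) blast

lemma lexle_refl: "\<forall>a\<in>set xs. R a a \<Longrightarrow> lexle R xs xs"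
  by (induct xs) (auto simp: pequiv_def)

lemma lexle_append: "\<forall>a\<in>set xs. R a a \<Longrightarrow> lexle R xs (xs @ ys)"
  by (induct xs) (auto simp: pequiv_def)

lemma lexle_trans:
  assumes "\<forall>a\<in>S. \<forall>b\<in>S. \<forall>c\<in>S. R a b \<longrightarrow> R b c \<longrightarrow> R a c"
  shows "set xs \<subseteq> S \<Longrightarrow> set ys \<subseteq> S \<Longrightarrow> set zs \<subseteq> S \<Longrightarrow>
    lexle R xs ys \<Longrightarrow> lexle R ys zs \<Longrightarrow> lexle R xs zs"
proof (induct xs arbitrary: ys zs)
  case (Cons x xs)
  obtain y ys' z zs' where yz: "ys = y # ys'" "zs = z # zs'"
    using Cons.prems(4,5) by (metis lexle_Cons_Nil neq_Nil_conv)
  have "x \<in> S" "y \<in> S" "z \<in> S" using Cons.prems(1-3) yz by auto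
  then have "R x y \<Longrightarrow> R y z \<Longrightarrow> R x z" "R y z \<Longrightarrow> R z x \<Longrightarrow> R y x"
    "R z x \<Longrightarrow> R x y \<Longrightarrow> R z y"
    using assms by blast+
  moreover have "lexle R xs ys' \<Longrightarrow> lexle R ys' zs' \<Longrightarrow> lexle R xs zs'"
    using Cons.hyps[of ys' zs'] Cons.prems(1-3) yz by simp
  ultimately show ?case
    using Cons.prems(4,5) unfolding yz by (simp add: pless_def pequiv_def) blast
qed simp

lemma lexle_total:
  assumes "\<forall>a\<in>S. \<forall>b\<in>S. R a b \<or> R b a"
  shows "set xs \<subseteq> S \<Longrightarrow> set ys \<subseteq> S \<Longrightarrow> lexle R xs ys \<or> lexle R ys xs"
proof (induct xs arbitrary: ys)
  case (Cons x xs)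
  with assms show ?case
    by (cases ys) (auto simp: pless_def pequiv_def)
qed simp

lemma lexle_antisym: "lexle R xs ys \<Longrightarrow> lexle R ys xs \<Longrightarrow> list_all2 (pequiv R) xs ys"
proof (induct xs arbitrary: ys)
  case (Cons x xs)
  then show ?case by (cases ys) (auto simp: pless_def pequiv_def)
qed (simp add: list_all2_Nil, metis lexle_Cons_Nil neq_Nil_conv)

lemma list_all2_pequiv_lexle: "list_all2 (pequiv R) xs ys \<Longrightarrow> lexle R xs ys"
  by (induct rule: list_all2_induct) auto

lemma lexle_cong:
  "\<forall>a\<in>set xs. \<forall>b\<in>set ys. R a b = R' a b \<and> R b a = R' b a \<Longrightarrow> lexle R xs ys = lexle R' xs ys"
proof (induct xs arbitrary: ys)
  case (Cons x xs)
  then show ?case by (cases ys) (auto simp: pless_def pequiv_def)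
qed simp

lemma lexle_map: "lexle R (map f xs) (map f ys) = lexle (\<lambda>a b. R (f a) (f b)) xs ys"
proof (induct xs arbitrary: ys)
  case (Cons x xs)
  then show ?case by (cases ys) (auto simp: pless_def pequiv_def)
qed simp

section \<open>Lexicographically maximal subsequences\<close>

lemma in_subseqs_Cons_iff:
  "D \<in> set (subseqs (x # xs)) \<longleftrightarrow>
     (\<exists>D'. D = x # D' \<and> D' \<in> set (subseqs xs)) \<or> D \<in> set (subseqs xs)"
  by (auto simp: Let_def)

lemma set_in_subseqs: "D \<in> set (subseqs xs) \<Longrightarrow> set D \<subseteq> set xs"
  by (metis Pow_iff image_eqI subseqs_powset)

lemma Nil_in_subseqs: "[] \<in> set (subseqs xs)"
  by (induct xs) (auto simp: Let_def)

lemma singleton_in_subseqs: "y \<in> set xs \<Longrightarrow> [y] \<in> set (subseqs xs)"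
  by (induct xs) (auto simp del: subseqs.simps simp: in_subseqs_Cons_iff Nil_in_subseqs)

lemma Cons_in_subseqs_split:
  "y # ys \<in> set (subseqs xs) \<Longrightarrow> \<exists>xs1 xs2. xs = xs1 @ y # xs2 \<and> ys \<in> set (subseqs xs2)"
proof (induct xs)
  case (Cons x xs)
  then show ?case
    unfolding in_subseqs_Cons_iff by (metis append_Cons append_Nil list.inject)
qed simp

lemma lexmax_cong:
  assumes "\<forall>a\<in>set xs. \<forall>b\<in>set xs. R a b = R' a b"
  shows "lexmax R xs = lexmax R' xs"
proof -
  have "lexle R D C = lexle R' D C"
    if "C \<in> set (subseqs xs)" "D \<in> set (subseqs xs)" for C D
    using set_in_subseqs[OF that(1)] set_in_subseqs[OF that(2)] assms
    by (intro lexle_cong) blast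
  then show ?thesis
    unfolding lexmax_def by (intro arg_cong[where f = Eps] ext) blast
qed

lemma ex_lexmax_subseq_Cons:
  assumes total: "\<forall>a\<in>set (x # xs). \<forall>b\<in>set (x # xs). R a b \<or> R b a"
    and trans: "\<forall>a\<in>set (x # xs). \<forall>b\<in>set (x # xs). \<forall>c\<in>set (x # xs). R a b \<longrightarrow> R b c \<longrightarrow> R a c"
    and C: "C \<in> set (subseqs xs)" "\<forall>D\<in>set (subseqs xs). lexle R D C"
  shows "\<exists>C'\<in>set (subseqs (x # xs)). \<forall>D\<in>set (subseqs (x # xs)). lexle R D C'"
proof -
  let ?S = "set (x # xs)"
  have CS: "set C \<subseteq> ?S" "set (x # C) \<subseteq> ?S" using set_in_subseqs[OF C(1)] by auto
  have "R x x" using total by simp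
  then have lexle_Cons: "lexle R (x # D) (x # C)" if "D \<in> set (subseqs xs)" for D
    using C(2) that by (simp add: pequiv_def)
  have lexle_trans_S: "lexle R xs' ys' \<Longrightarrow> lexle R ys' zs' \<Longrightarrow> lexle R xs' zs'"
    if "set xs' \<subseteq> ?S" "set ys' \<subseteq> ?S" "set zs' \<subseteq> ?S" for xs' ys' zs'
    by (rule lexle_trans[OF trans that])
  have cases: "(\<And>D'. D = x # D' \<Longrightarrow> D' \<in> set (subseqs xs) \<Longrightarrow> P) \<Longrightarrow>
      (D \<in> set (subseqs xs) \<Longrightarrow> P) \<Longrightarrow> P" if "D \<in> set (subseqs (x # xs))" for D P
    using that by (auto simp: Let_def)
  have C_in: "C \<in> set (subseqs (x # xs))" "x # C \<in> set (subseqs (x # xs))"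
    using C(1) by (simp_all add: Let_def)
  show ?thesis
  proof (cases "lexle R (x # C) C")
    case True
    have "lexle R D C" if "D \<in> set (subseqs (x # xs))" for D
      using that
    proof (rule cases)
      fix D' assume D': "D = x # D'" "D' \<in> set (subseqs xs)"
      have "set (x # D') \<subseteq> ?S" using set_in_subseqs[OF D'(2)] by auto
      then show ?thesis
        using lexle_trans_S[of "x # D'" "x # C" C] CS lexle_Cons[OF D'(2)] True D'(1) by simp
    next
      assume "D \<in> set (subseqs xs)"
      then show ?thesis using C(2) by blast
    qed
    then show ?thesis using C_in(1) by blast
  next
    case False
    then have le: "lexle R C (x # C)" using lexle_total[OF total CS(2,1)] by blast
    have "lexle R D (x # C)" if "D \<in> set (subseqs (x # xs))" for D
      using that
    proof (rule cases)
      fix D' assume "D = x # D'" "D' \<in> set (subseqs xs)"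
      then show ?thesis using lexle_Cons by simp
    next
      assume D: "D \<in> set (subseqs xs)"
      have "set D \<subseteq> ?S" using set_in_subseqs[OF D] by auto
      then show ?thesis using lexle_trans_S[of D C "x # C"] CS C(2) D le by blast
    qed
    then show ?thesis using C_in(2) by blast
  qed
qed

lemma ex_lexmax_subseq:
  assumes "\<forall>a\<in>set xs. \<forall>b\<in>set xs. R a b \<or> R b a"
    and "\<forall>a\<in>set xs. \<forall>b\<in>set xs. \<forall>c\<in>set xs. R a b \<longrightarrow> R b c \<longrightarrow> R a c"
  shows "\<exists>C\<in>set (subseqs xs). \<forall>D\<in>set (subseqs xs). lexle R D C"
  using assms
proof (induct xs)
  case Nil
  have "[] \<in> set (subseqs ([] :: 'a list))" by simp
  then show ?case by auto
next
  case (Cons x xs)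
  have "\<forall>a\<in>set xs. \<forall>b\<in>set xs. R a b \<or> R b a" using Cons.prems(1) by (meson list.set_intros(2))
  moreover have "\<forall>a\<in>set xs. \<forall>b\<in>set xs. \<forall>c\<in>set xs. R a b \<longrightarrow> R b c \<longrightarrow> R a c"
    using Cons.prems(2) by (meson list.set_intros(2))
  ultimately obtain C where "C \<in> set (subseqs xs)" "\<forall>D\<in>set (subseqs xs). lexle R D C"
    using Cons.hyps by blast
  then show ?case by (rule ex_lexmax_subseq_Cons[OF Cons.prems])
qed

lemma lexmax_spec:
  assumes "\<forall>a\<in>set xs. \<forall>b\<in>set xs. R a b \<or> R b a"
    and "\<forall>a\<in>set xs. \<forall>b\<in>set xs. \<forall>c\<in>set xs. R a b \<longrightarrow> R b c \<longrightarrow> R a c"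
  shows "lexmax R xs \<in> set (subseqs xs)"
    and "D \<in> set (subseqs xs) \<Longrightarrow> lexle R D (lexmax R xs)"
proof -
  have "\<exists>C. C \<in> set (subseqs xs) \<and> (\<forall>D\<in>set (subseqs xs). lexle R D C)"
    using ex_lexmax_subseq[OF assms] by blast
  from someI_ex[OF this]
  have "lexmax R xs \<in> set (subseqs xs) \<and> (\<forall>D\<in>set (subseqs xs). lexle R D (lexmax R xs))"
    unfolding lexmax_def .
  then show "lexmax R xs \<in> set (subseqs xs)"
    and "D \<in> set (subseqs xs) \<Longrightarrow> lexle R D (lexmax R xs)" by simp_all
qed

lemma set_lexmax_subset:
  assumes "\<forall>a\<in>S. \<forall>b\<in>S. R a b \<or> R b a"
    and "\<forall>a\<in>S. \<forall>b\<in>S. \<forall>c\<in>S. R a b \<longrightarrow> R b c \<longrightarrow> R a c" and "set xs \<subseteq> S"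
  shows "set (lexmax R xs) \<subseteq> S"
proof -
  have "\<forall>a\<in>set xs. \<forall>b\<in>set xs. R a b \<or> R b a"
    "\<forall>a\<in>set xs. \<forall>b\<in>set xs. \<forall>c\<in>set xs. R a b \<longrightarrow> R b c \<longrightarrow> R a c"
    using assms by (meson subsetD)+
  then show ?thesis using lexmax_spec(1) set_in_subseqs assms(3) by blast
qed

lemma lexmax_singleton: "R x x \<Longrightarrow> lexmax R [x] = [x]"
  unfolding lexmax_def
proof (rule some_equality)
  have subseqs: "set (subseqs [x]) = {[x], []}" by simp
  fix C assume C: "C \<in> set (subseqs [x]) \<and> (\<forall>D\<in>set (subseqs [x]). lexle R D C)"
  then have "lexle R [x] C" using subseqs by blast
  then have "C \<noteq> []" by auto
  then show "C = [x]" using C subseqs by blast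
qed (auto simp: pequiv_def)

section \<open>The preorder on words\<close>

definition spread :: "nat list \<Rightarrow> nat" where
  "spread xs = (if xs = [] then 0 else Suc (Max (set xs) - Min (set xs)))"

lemma spread_mono: "set xs \<subseteq> set ys \<Longrightarrow> spread xs \<le> spread ys"
proof (cases "xs = []")
  case False
  assume sub: "set xs \<subseteq> set ys"
  with False have ne: "set xs \<noteq> {}" "ys \<noteq> []" by auto
  have "Max (set xs) \<le> Max (set ys)" "Min (set ys) \<le> Min (set xs)" "Min (set xs) \<le> Max (set xs)"
    using Max_mono[OF sub ne(1)] Min_antimono[OF sub ne(1)] ne by simp_all
  then have "Max (set xs) - Min (set xs) \<le> Max (set ys) - Min (set ys)" by arith
  then show ?thesis using False ne unfolding spread_def by simp
qed (simp add: spread_def)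

lemma spread_less:
  assumes "xs \<noteq> []" "\<forall>y\<in>set ys. y \<in> set xs \<and> Min (set xs) < y"
  shows "spread ys < spread xs"
proof (cases "ys = []")
  case False
  have sub: "set ys \<subseteq> set xs" using assms by auto
  have "Max (set ys) \<le> Max (set xs)" "Min (set xs) < Min (set ys)" "Min (set ys) \<le> Max (set ys)"
    using Max_mono[OF sub] assms(2) False by simp_all
  then have "Max (set ys) - Min (set ys) < Max (set xs) - Min (set xs)" by arith
  then show ?thesis using False assms unfolding spread_def by simp
qed (use assms in \<open>simp add: spread_def\<close>)

lemma prec_eq_prec_aux_spread: "A @ B \<noteq> [] \<Longrightarrow> prec A B = prec_aux (spread (A @ B)) A B"
  unfolding prec_def spread_def by (simp only: if_False)

lemma prec_aux_refl: "prec_aux d A A"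
proof (induct d arbitrary: A)
  case (Suc d)
  then show ?case by (simp add: Let_def lexle_refl)
qed simp

lemma prec_refl: "prec A A"
  unfolding prec_def by (rule prec_aux_refl)

lemma splitn_Min_piece:
  assumes "set X \<subseteq> set Z" "p \<in> set (splitn (Min (set Z)) X)" "y \<in> set p"
  shows "y \<in> set Z \<and> Min (set Z) < y"
proof -
  have "y \<in> set Z" "y \<noteq> Min (set Z)" using splitn_piece[OF assms(2)] assms by auto
  then show ?thesis by (simp add: order.not_eq_order_implies_strict)
qed

lemma spread_splitn_Min_pieces:
  assumes "Z \<noteq> []" "\<forall>X\<in>Xs. set X \<subseteq> set Z"
    and "\<forall>p\<in>set ps. p \<in> (\<Union>X\<in>Xs. set (splitn (Min (set Z)) X))"
  shows "spread (concat ps) < spread Z"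
proof (rule spread_less[OF assms(1)], intro ballI)
  fix y assume "y \<in> set (concat ps)"
  then obtain p X where "y \<in> set p" "X \<in> Xs" "p \<in> set (splitn (Min (set Z)) X)"
    using assms(3) by auto
  then show "y \<in> set Z \<and> Min (set Z) < y" using splitn_Min_piece assms(2) by blast
qed

text \<open>The fuel of \<open>prec\<close> is exactly the spread of the compared words; the recursion
  only compares pieces of smaller spread. That more fuel gives the same relation and that
  \<open>prec\<close> is a total preorder are proved together by induction on a bound for the spread:
  changing the relation on the pieces is harmless only once their maximal subsequences are
  known to exist.\<close>

definition fuel_sufficient :: "nat \<Rightarrow> bool" where
  "fuel_sufficient M \<longleftrightarrow>
     (\<forall>A B d. spread (A @ B) < M \<longrightarrow> spread (A @ B) \<le> d \<longrightarrow> prec_aux d A B = prec A B)"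

definition preorder_below :: "nat \<Rightarrow> bool" where
  "preorder_below M \<longleftrightarrow>
     (\<forall>A B C. spread (A @ B @ C) < M \<longrightarrow>
        (prec A B \<or> prec B A) \<and> (prec A B \<longrightarrow> prec B C \<longrightarrow> prec A C))"

lemma prec_aux_unfold:
  assumes fuel: "fuel_sufficient M" and preorder: "preorder_below M"
    and ne: "A @ B \<noteq> []" and "spread (A @ B) \<le> M" "spread (A @ B) \<le> d"
  defines "n \<equiv> Min (set (A @ B))"
  shows "prec_aux d A B = lexle prec (lexmax prec (splitn n A)) (lexmax prec (splitn n B))"
proof -
  obtain d0 where d0: "d = Suc d0"
    using assms(5) ne by (cases d) (auto simp: spread_def)
  define S where "S = (\<Union>X\<in>{A, B}. set (splitn n X))"
  have "\<forall>X\<in>{A, B}. set X \<subseteq> set (A @ B)" by auto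
  then have small: "spread (x @ y @ z) < spread (A @ B)" if "x \<in> S" "y \<in> S" "z \<in> S" for x y z
    using spread_splitn_Min_pieces[OF ne, of "{A, B}" "[x, y, z]"] that
    unfolding S_def n_def by simp
  have agree: "prec_aux d0 x y = prec x y" if "x \<in> S" "y \<in> S" for x y
    using small[OF that(1,2,2)] spread_mono[of "x @ y" "x @ y @ y"] assms(4,5) fuel d0
    unfolding fuel_sufficient_def by fastforce
  have "(prec x y \<or> prec y x) \<and> (prec x y \<longrightarrow> prec y z \<longrightarrow> prec x z)"
    if "x \<in> S" "y \<in> S" "z \<in> S" for x y z
  proof -
    have "spread (x @ y @ z) < M" using small[OF that] assms(4) by linarith
    then show ?thesis using preorder unfolding preorder_below_def by blast
  qed
  then have total: "\<forall>x\<in>S. \<forall>y\<in>S. prec x y \<or> prec y x"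
    and trans: "\<forall>x\<in>S. \<forall>y\<in>S. \<forall>z\<in>S. prec x y \<longrightarrow> prec y z \<longrightarrow> prec x z"
    by blast+
  have pieces_S: "set (splitn n A) \<subseteq> S" "set (splitn n B) \<subseteq> S" by (auto simp: S_def)
  have in_S: "set (lexmax prec (splitn n A)) \<subseteq> S" "set (lexmax prec (splitn n B)) \<subseteq> S"
    by (rule set_lexmax_subset[OF total trans pieces_S(1)], rule set_lexmax_subset[OF total trans pieces_S(2)])
  have "prec_aux d A B = lexle (prec_aux d0) (lexmax (prec_aux d0) (splitn n A))
      (lexmax (prec_aux d0) (splitn n B))"
    unfolding d0 n_def by (simp only: prec_aux.simps Let_def ne if_False)
  also have "\<dots> = lexle (prec_aux d0) (lexmax prec (splitn n A)) (lexmax prec (splitn n B))"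
    using agree pieces_S by (subst (1 2) lexmax_cong[where R' = prec]) auto
  also have "\<dots> = lexle prec (lexmax prec (splitn n A)) (lexmax prec (splitn n B))"
    using in_S agree by (intro lexle_cong) blast
  finally show ?thesis .
qed

lemma prec_splitn_below:
  assumes "fuel_sufficient M" "preorder_below M" "spread (X @ Y) \<le> M"
    and "\<forall>y\<in>set (X @ Y). m \<le> y"
  shows "prec X Y = lexle prec (lexmax prec (splitn m X)) (lexmax prec (splitn m Y))"
proof (cases "m \<in> set (X @ Y)")
  case True
  then have "X @ Y \<noteq> []" "Min (set (X @ Y)) = m"
    using assms(4) by (auto intro: Min_eqI)
  then show ?thesis
    using prec_aux_unfold[OF assms(1-2) _ assms(3) order.refl] prec_eq_prec_aux_spread by simp
next
  case False
  then show ?thesis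
    by (auto simp: splitn_no_sep lexmax_singleton prec_refl pless_def pequiv_def)
qed

lemma fuel_sufficient_Suc:
  assumes "fuel_sufficient M" "preorder_below M"
  shows "fuel_sufficient (Suc M)"
  unfolding fuel_sufficient_def
proof (intro allI impI)
  fix A B d assume "spread (A @ B) < Suc M" "spread (A @ B) \<le> d"
  then show "prec_aux d A B = prec A B"
    using prec_aux_unfold[OF assms, of A B] prec_aux_unfold[OF assms, of A B "spread (A @ B)"]
      prec_eq_prec_aux_spread[of A B] prec_aux_refl prec_refl
    by (cases "A @ B = []") auto
qed

lemma preorder_below_Suc:
  assumes fuel: "fuel_sufficient M" and preorder: "preorder_below M"
  shows "preorder_below (Suc M)"
  unfolding preorder_below_def
proof (intro allI impI)
  fix A B C assume small: "spread (A @ B @ C) < Suc M"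
  show "(prec A B \<or> prec B A) \<and> (prec A B \<longrightarrow> prec B C \<longrightarrow> prec A C)"
  proof (cases "A @ B @ C = []")
    case True
    then show ?thesis by (simp add: prec_refl)
  next
    case ne: False
    define m where "m = Min (set (A @ B @ C))"
    define L where "L X = lexmax prec (splitn m X)" for X
    define S where "S = (\<Union>X\<in>{A, B, C}. set (splitn m X))"
    have prec_L: "prec X Y = lexle prec (L X) (L Y)" if "X \<in> {A, B, C}" "Y \<in> {A, B, C}" for X Y
    proof -
      have "set (X @ Y) \<subseteq> set (A @ B @ C)" using that by auto
      then have "spread (X @ Y) \<le> M" "\<forall>y\<in>set (X @ Y). m \<le> y"
        using spread_mono[of "X @ Y" "A @ B @ C"] small unfolding m_def by auto
      then show ?thesis unfolding L_def by (rule prec_splitn_below[OF fuel preorder])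
    qed
    have "(prec x y \<or> prec y x) \<and> (prec x y \<longrightarrow> prec y z \<longrightarrow> prec x z)"
      if "x \<in> S" "y \<in> S" "z \<in> S" for x y z
    proof -
      have "\<forall>X\<in>{A, B, C}. set X \<subseteq> set (A @ B @ C)" by auto
      then have "spread (x @ y @ z) < spread (A @ B @ C)"
        using spread_splitn_Min_pieces[OF ne, of "{A, B, C}" "[x, y, z]"] that
        unfolding S_def m_def by simp
      then have "spread (x @ y @ z) < M" using small by linarith
      then show ?thesis using preorder unfolding preorder_below_def by blast
    qed
    then have total: "\<forall>x\<in>S. \<forall>y\<in>S. prec x y \<or> prec y x"
      and trans: "\<forall>x\<in>S. \<forall>y\<in>S. \<forall>z\<in>S. prec x y \<longrightarrow> prec y z \<longrightarrow> prec x z"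
      by blast+
    have L_S: "set (L X) \<subseteq> S" if "X \<in> {A, B, C}" for X
      unfolding L_def using that by (intro set_lexmax_subset[OF total trans]) (auto simp: S_def)
    have LA: "set (L A) \<subseteq> S" and LB: "set (L B) \<subseteq> S" and LC: "set (L C) \<subseteq> S"
      by (rule L_S, simp)+
    have "lexle prec (L A) (L B) \<or> lexle prec (L B) (L A)"
      by (rule lexle_total[OF total LA LB])
    moreover have "lexle prec (L A) (L B) \<Longrightarrow> lexle prec (L B) (L C) \<Longrightarrow> lexle prec (L A) (L C)"
      by (rule lexle_trans[OF trans LA LB LC])
    ultimately show ?thesis using prec_L by simp
  qed
qed

lemma fuel_sufficient_preorder_below: "fuel_sufficient M \<and> preorder_below M"
proof (induct M)
  case 0
  then show ?case by (simp add: fuel_sufficient_def preorder_below_def)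
next
  case (Suc M)
  then show ?case using fuel_sufficient_Suc preorder_below_Suc by blast
qed

lemma prec_total: "prec A B \<or> prec B A"
  using fuel_sufficient_preorder_below[of "Suc (spread (A @ B @ B))"]
  unfolding preorder_below_def by auto

lemma prec_trans: "prec A B \<Longrightarrow> prec B C \<Longrightarrow> prec A C"
  using fuel_sufficient_preorder_below[of "Suc (spread (A @ B @ C))"]
  unfolding preorder_below_def by auto

lemma prec_splitn:
  "\<forall>y\<in>set (X @ Y). m \<le> y \<Longrightarrow>
    prec X Y = lexle prec (lexmax prec (splitn m X)) (lexmax prec (splitn m Y))"
  using fuel_sufficient_preorder_below prec_splitn_below by blast

lemma lexmax_prec:
  shows "lexmax prec xs \<in> set (subseqs xs)"
    and "D \<in> set (subseqs xs) \<Longrightarrow> lexle prec D (lexmax prec xs)"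
  using lexmax_spec[of xs prec] prec_total prec_trans by blast+

lemma lexle_prec_trans: "lexle prec xs ys \<Longrightarrow> lexle prec ys zs \<Longrightarrow> lexle prec xs zs"
  using lexle_trans[of UNIV prec xs ys zs] prec_trans by blast

lemma lexle_prec_cong:
  assumes "list_all2 (pequiv prec) xs xs'" "list_all2 (pequiv prec) ys ys'"
  shows "lexle prec xs ys = lexle prec xs' ys'"
proof -
  have sym: "list_all2 (pequiv prec) zs' zs" if "list_all2 (pequiv prec) zs zs'" for zs zs'
    using that by (simp add: list_all2_conv_all_nth pequiv_def)
  have "lexle prec xs xs'" "lexle prec xs' xs" "lexle prec ys ys'" "lexle prec ys' ys"
    using assms sym[OF assms(1)] sym[OF assms(2)] by (simp_all add: list_all2_pequiv_lexle)
  then show ?thesis using lexle_prec_trans by blast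
qed

lemma lexmax_snoc:
  assumes less: "\<forall>x\<in>set ys. pless prec x y"
  shows "lexmax prec (ys @ [y]) = [y]"
proof -
  define L where "L = lexmax prec (ys @ [y])"
  have L_in: "L \<in> set (subseqs (ys @ [y]))" unfolding L_def by (rule lexmax_prec(1))
  have "lexle prec [y] L"
    using lexmax_prec(2)[OF singleton_in_subseqs] unfolding L_def by simp
  then obtain c L' where L: "L = c # L'" and "prec y c"
    by (cases L) (auto simp: pless_def pequiv_def)
  with less have "c \<notin> set ys" by (auto simp: pless_def)
  moreover have "c \<in> set (ys @ [y])" using set_in_subseqs[OF L_in] L by auto
  ultimately have c: "c = y" by simp
  obtain xs1 xs2 where split: "ys @ [y] = xs1 @ c # xs2" "L' \<in> set (subseqs xs2)"
    using Cons_in_subseqs_split[of c L' "ys @ [y]"] L_in L by blast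
  have "xs2 = []"
  proof (cases xs2 rule: rev_exhaust)
    case (snoc zs z)
    then have "ys = xs1 @ c # zs" using split(1) by simp
    then show ?thesis using \<open>c \<notin> set ys\<close> by simp
  qed
  then show ?thesis using split(2) L c unfolding L_def by simp
qed

definition prec_desc :: "nat list list \<Rightarrow> bool" where
  "prec_desc xs \<longleftrightarrow> sorted_wrt (\<lambda>a b. prec b a) xs"

lemma prec_desc_iff_nth: "prec_desc xs \<longleftrightarrow> (\<forall>i. Suc i < length xs \<longrightarrow> prec (xs ! Suc i) (xs ! i))"
proof -
  have "transp (\<lambda>a b. prec b a)" by (rule transpI) (metis prec_trans)
  then show ?thesis unfolding prec_desc_def by (simp add: sorted_wrt_iff_nth_Suc_transp)
qed

lemma prec_desc_subseq_lexle: "prec_desc xs \<Longrightarrow> D \<in> set (subseqs xs) \<Longrightarrow> lexle prec D xs"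
proof (induct xs arbitrary: D)
  case (Cons x xs)
  have below: "\<forall>y\<in>set xs. prec y x" and desc: "prec_desc xs"
    using Cons.prems(1) unfolding prec_desc_def by simp_all
  consider D' where "D = x # D'" "D' \<in> set (subseqs xs)" | "D \<in> set (subseqs xs)"
    using Cons.prems(2) unfolding in_subseqs_Cons_iff by blast
  then show ?case
  proof cases
    case 1
    then show ?thesis using Cons.hyps[OF desc] prec_refl by (simp add: pequiv_def)
  next
    case 2
    show ?thesis
    proof (cases D)
      case (Cons d D'')
      with 2 have "d \<in> set xs" "D'' \<in> set (subseqs xs)"
        using set_in_subseqs Cons_in_subseqsD by fastforce+
      then show ?thesis
        using Cons below Cons.hyps[OF desc] by (auto simp: pless_def pequiv_def)
    qed simp
  qed
qed simp

lemma lexmax_prec_desc: "prec_desc xs \<Longrightarrow> list_all2 (pequiv prec) (lexmax prec xs) xs"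
  using lexle_antisym prec_desc_subseq_lexle lexmax_prec subseqs_refl by metis

lemma prec_splitn_desc:
  assumes "\<forall>y\<in>set (X @ Y). m \<le> y" "prec_desc (splitn m X)" "prec_desc (splitn m Y)"
  shows "prec X Y = lexle prec (splitn m X) (splitn m Y)"
  using prec_splitn[OF assms(1)] lexle_prec_cong[OF lexmax_prec_desc[OF assms(2)]
      lexmax_prec_desc[OF assms(3)]] by simp

section \<open>Normal forms\<close>

lemma NF_splitn:
  assumes X: "X \<in> NF" and ge: "\<forall>y\<in>set X. m \<le> y"
  shows "prec_desc (splitn m X)" "\<forall>p\<in>set (splitn m X). p \<in> NF"
proof (atomize (full), cases "m \<in> set X")
  case False
  then show "prec_desc (splitn m X) \<and> (\<forall>p\<in>set (splitn m X). p \<in> NF)"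
    using X by (simp add: splitn_no_sep prec_desc_def)
next
  case True
  then have "Min (set X) = m" using ge by (intro Min_eqI) auto
  with X True show "prec_desc (splitn m X) \<and> (\<forall>p\<in>set (splitn m X). p \<in> NF)"
    by cases (auto simp: prec_desc_iff_nth)
qed

lemma NF_intro:
  assumes "A \<noteq> []" "Min (set A) = n" "prec_desc (splitn n A)" "\<forall>p\<in>set (splitn n A). p \<in> NF"
  shows "A \<in> NF"
  using assms by (intro NF_step) (auto simp: prec_desc_iff_nth)

lemma joinw_NF:
  assumes "ps \<noteq> []" "\<forall>p\<in>set ps. p \<in> NF \<and> (\<forall>y\<in>set p. n < y)" "prec_desc ps"
  shows "joinw n ps \<in> NF"
proof (cases "length ps = 1")
  case True
  with assms show ?thesis by (cases ps) auto
next
  case False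
  then obtain p q ps' where ps: "ps = p # q # ps'" using assms(1) by (cases ps; cases "tl ps") auto
  then have n_in: "n \<in> set (joinw n ps)" by simp
  have "\<forall>y\<in>set (joinw n ps). n \<le> y"
    using set_joinw[of n ps] assms(2) by fastforce
  then have "Min (set (joinw n ps)) = n" using n_in by (intro Min_eqI) auto
  moreover have "splitn n (joinw n ps) = ps"
    using assms(1,2) by (intro splitn_joinw) auto
  ultimately show ?thesis
    using assms n_in by (intro NF_intro) auto
qed

lemma wequiv_sym: "wequiv A B \<Longrightarrow> wequiv B A"
  by (simp add: wequiv_def)

lemma wequiv_trans: "wequiv A B \<Longrightarrow> wequiv B C \<Longrightarrow> wequiv A C"
  by (meson prec_trans wequiv_def)

lemma NF_wequiv_eq: "B \<in> NF \<Longrightarrow> K \<in> NF \<Longrightarrow> wequiv B K \<Longrightarrow> B = K"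
proof (induct "length B + length K" arbitrary: B K rule: less_induct)
  case less
  show ?case
  proof (cases "B @ K = []")
    case False
    define n where "n = Min (set (B @ K))"
    have geB: "\<forall>y\<in>set B. n \<le> y" and geK: "\<forall>y\<in>set K. n \<le> y" unfolding n_def by auto
    note B = NF_splitn[OF less.prems(1) geB] and K = NF_splitn[OF less.prems(2) geK]
    have "lexle prec (splitn n B) (splitn n K)" "lexle prec (splitn n K) (splitn n B)"
      using less.prems(3) prec_splitn_desc[of B K n] prec_splitn_desc[of K B n] B(1) K(1) geB geK
      unfolding wequiv_def by auto
    then have equiv: "list_all2 (pequiv prec) (splitn n B) (splitn n K)" by (rule lexle_antisym)
    then have len: "length (splitn n B) = length (splitn n K)" by (rule list_all2_lengthD)
    have "n \<in> set (B @ K)" unfolding n_def using False by (intro Min_in) auto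
    moreover have "n \<in> set X" if "n \<in> set Y" "length (splitn n X) = length (splitn n Y)" for X Y
    proof (rule ccontr)
      assume "n \<notin> set X"
      then show False using that length_splitn_ge_2[OF that(1)] by (simp add: splitn_no_sep)
    qed
    ultimately have nBK: "n \<in> set B" "n \<in> set K" using len by auto
    have "splitn n B = splitn n K"
    proof (rule nth_equalityI[OF len])
      fix i assume i: "i < length (splitn n B)"
      let ?p = "splitn n B ! i" and ?q = "splitn n K ! i"
      have "?p \<in> set (splitn n B)" "?q \<in> set (splitn n K)" using i len by simp_all
      then have "length ?p + length ?q < length B + length K" "?p \<in> NF" "?q \<in> NF"
        using length_splitn_piece nBK B(2) K(2) by (fastforce intro: add_strict_mono)+
      moreover have "wequiv ?p ?q"
        using equiv i by (simp add: list_all2_conv_all_nth pequiv_def wequiv_def)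
      ultimately show "?p = ?q" using less.hyps by blast
    qed
    then show ?thesis by (metis joinw_splitn)
  qed simp
qed

lemma diamond_eqI:
  assumes "B \<in> NF" "wequiv B (A @ [n])"
  shows "diamond n A = B"
  unfolding diamond_def
proof (rule the_equality)
  fix C assume "C \<in> NF \<and> wequiv C (A @ [n])"
  then show "C = B" using assms NF_wequiv_eq wequiv_trans wequiv_sym by blast
qed (use assms in simp)

lemma wequiv_joinw_snoc:
  assumes "\<forall>p\<in>set (xs @ [y]). n \<notin> set p" "\<forall>a\<in>set (B @ joinw n (xs @ [y])). n \<le> a"
    and "n \<notin> set B" "\<forall>x\<in>set xs. pless prec x y" "wequiv B y"
  shows "wequiv B (joinw n (xs @ [y]))"
proof -
  have "splitn n (joinw n (xs @ [y])) = xs @ [y]" using assms(1) by (intro splitn_joinw) auto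
  then have "lexmax prec (splitn n (joinw n (xs @ [y]))) = [y]" using lexmax_snoc assms(4) by simp
  moreover have "lexmax prec (splitn n B) = [B]"
    using assms(3) by (simp add: splitn_no_sep lexmax_singleton prec_refl)
  moreover have "\<forall>a\<in>set (joinw n (xs @ [y]) @ B). n \<le> a" using assms(2) by auto
  ultimately show ?thesis
    using prec_splitn[OF assms(2)] prec_splitn[of "joinw n (xs @ [y])" B n] assms(5)
    by (simp add: wequiv_def pequiv_def)
qed

section \<open>Words over the letters 2 and 3\<close>

definition exp_word :: "nat list \<Rightarrow> nat list" where
  "exp_word es = joinw 2 (map (\<lambda>e. replicate e 3) es)"

lemma set_exp_word: "set (exp_word es) \<subseteq> {2, 3}"
  using set_joinw[of 2 "map (\<lambda>e. replicate e 3) es"] unfolding exp_word_def by auto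

lemma splitn_exp_word: "es \<noteq> [] \<Longrightarrow> splitn 2 (exp_word es) = map (\<lambda>e. replicate e 3) es"
  unfolding exp_word_def by (rule splitn_joinw) auto

lemma splitn_3_replicate: "splitn 3 (replicate e 3) = replicate (Suc e) []"
  by (induct e) auto

lemma prec_replicate_3: "prec (replicate a 3) (replicate b 3) \<longleftrightarrow> a \<le> b"
proof -
  have "prec_desc (replicate n [])" for n
    by (simp add: prec_desc_iff_nth prec_refl)
  moreover have "\<forall>y\<in>set (replicate a 3 @ replicate b 3). (3 :: nat) \<le> y" by auto
  ultimately have "prec (replicate a 3) (replicate b 3) =
      lexle prec (replicate (Suc a) []) (replicate (Suc b) [])"
    using prec_splitn_desc[of "replicate a 3" "replicate b 3" 3]
    by (simp only: splitn_3_replicate)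
  also have "\<dots> \<longleftrightarrow> a \<le> b"
  proof (induct a arbitrary: b)
    case 0
    show ?case using prec_refl[of "[]"] by (cases b) (simp_all add: pless_def pequiv_def)
  next
    case (Suc a)
    then show ?case using prec_refl[of "[]"] by (cases b) (simp_all add: pless_def pequiv_def)
  qed
  finally show ?thesis .
qed

lemma replicate_3_NF: "replicate e 3 \<in> NF"
proof (cases e)
  case (Suc e')
  then have "replicate e 3 \<noteq> []" "Min (set (replicate e 3)) = (3 :: nat)"
    by (simp_all del: replicate_Suc)
  moreover have "prec_desc (splitn 3 (replicate e 3))"
    unfolding splitn_3_replicate by (simp add: prec_desc_iff_nth prec_refl del: replicate_Suc)
  moreover have "\<forall>p\<in>set (splitn 3 (replicate e 3)). p \<in> NF"
    unfolding splitn_3_replicate by (simp add: NF_empty del: replicate_Suc)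
  ultimately show ?thesis by (rule NF_intro)
qed (simp add: NF_empty)

lemma prec_exp_word:
  assumes "es \<noteq> []" "fs \<noteq> []" "sorted_wrt (\<ge>) es" "sorted_wrt (\<ge>) fs"
  shows "prec (exp_word es) (exp_word fs) \<longleftrightarrow> lexle (\<le>) es fs"
proof -
  have desc: "prec_desc (map (\<lambda>e. replicate e 3) gs)" if "sorted_wrt (\<ge>) gs" for gs
    using that unfolding prec_desc_def sorted_wrt_map by (simp add: prec_replicate_3)
  have "\<forall>y\<in>set (exp_word es @ exp_word fs). 2 \<le> y"
    using set_exp_word[of es] set_exp_word[of fs] by auto
  then have "prec (exp_word es) (exp_word fs) =
      lexle prec (map (\<lambda>e. replicate e 3) es) (map (\<lambda>e. replicate e 3) fs)"
    using prec_splitn_desc desc assms by (simp add: splitn_exp_word)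
  also have "\<dots> = lexle (\<le>) es fs"
    unfolding lexle_map by (simp add: prec_replicate_3)
  finally show ?thesis .
qed

lemma pless_exp_word:
  assumes "es \<noteq> []" "fs \<noteq> []" "sorted_wrt (\<ge>) es" "sorted_wrt (\<ge>) fs"
  shows "pless prec (exp_word es) (exp_word fs) \<longleftrightarrow> lexle (\<le>) es fs \<and> \<not> lexle (\<le>) fs es"
  using prec_exp_word[OF assms] prec_exp_word[OF assms(2,1,4,3)] by (simp add: pless_def)

lemma exp_word_NF: "es \<noteq> [] \<Longrightarrow> sorted_wrt (\<ge>) es \<Longrightarrow> exp_word es \<in> NF"
  unfolding exp_word_def prec_desc_def
  by (intro joinw_NF) (auto simp: replicate_3_NF prec_desc_def sorted_wrt_map prec_replicate_3)

lemma pless_nat_le [simp]: "pless (\<le>) (a :: nat) b \<longleftrightarrow> a < b"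
  by (auto simp: pless_def)

lemma pequiv_nat_le [simp]: "pequiv (\<le>) (a :: nat) b \<longleftrightarrow> a = b"
  by (auto simp: pequiv_def)

lemma lexle_nat_append: "lexle (\<le>) (xs :: nat list) (xs @ ys)"
  by (rule lexle_append) simp

lemma not_lexle_nat_append: "ys \<noteq> [] \<Longrightarrow> \<not> lexle (\<le>) ((xs :: nat list) @ ys) xs"
  by (induct xs) (auto simp: neq_Nil_conv)

lemma lexle_nat_less:
  "(a :: nat) < b \<Longrightarrow> lexle (\<le>) (xs @ a # ys) (xs @ b # zs) \<and> \<not> lexle (\<le>) (xs @ b # zs) (xs @ a # ys)"
  by (induct xs) auto

lemma rev_upt_split: "a \<le> b \<Longrightarrow> b \<le> c \<Longrightarrow> rev [a..<c] = rev [b..<c] @ rev [a..<b]"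
  using upt_add_eq_append[of a b "c - b"] by simp

lemma sorted_wrt_ge_replicate: "sorted_wrt (\<ge>) (replicate j (x :: nat))"
  by (induct j) auto

lemma Kw_eq_exp_word: "Kw h k = exp_word (rev [k..<h] @ [k])"
  by (simp add: exp_word_def joinw_map_snoc Kw_def Iw_def[abs_def])

lemma Kw_NF: "Kw h k \<in> NF"
  unfolding Kw_eq_exp_word by (rule exp_word_NF) (auto simp: sorted_wrt_append sorted_wrt_rev)

lemma set_Kw: "set (Kw h k) \<subseteq> {2, 3}"
  unfolding Kw_eq_exp_word by (rule set_exp_word)

definition Qword :: "nat \<Rightarrow> nat \<Rightarrow> nat list" where
  "Qword h k = exp_word (rev [k - 1..<h])"

definition P_exps :: "nat \<Rightarrow> nat \<Rightarrow> nat \<Rightarrow> nat list" where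
  "P_exps h m j = rev [m - 1..<h] @ replicate j (m - 1)"

definition Pword :: "nat \<Rightarrow> nat \<Rightarrow> nat \<Rightarrow> nat list" where
  "Pword h m j = exp_word (P_exps h m j)"

lemma set_Qword: "set (Qword h k) \<subseteq> {2, 3}"
  unfolding Qword_def by (rule set_exp_word)

lemma set_Pword: "set (Pword h m j) \<subseteq> {2, 3}"
  unfolding Pword_def by (rule set_exp_word)

lemma Qword_snoc_3:
  assumes "1 \<le> k" "k \<le> h"
  shows "Qword h k @ [3] = Kw h k"
proof -
  have "rev [k - 1..<h] = rev [k..<h] @ [k - 1]"
    using assms rev_upt_split[of "k - 1" k h] by (simp add: upt_rec)
  moreover have "replicate (k - 1) 3 @ [3] = replicate k (3 :: nat)"
    using assms by (cases k) (simp_all add: replicate_append_same)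
  ultimately show ?thesis
    by (simp add: Qword_def exp_word_def joinw_map_snoc Kw_def Iw_def[abs_def])
qed

lemma P_exps_add: "P_exps h m (j + d) = P_exps h m j @ replicate d (m - 1)"
  by (simp add: P_exps_def replicate_add)

context
  fixes h m :: nat
  assumes m: "1 \<le> m" "m \<le> h"
begin

lemma P_exps_nonempty_sorted: "P_exps h m j \<noteq> [] \<and> sorted_wrt (\<ge>) (P_exps h m j)"
  using m by (auto simp: P_exps_def sorted_wrt_append sorted_wrt_rev sorted_wrt_ge_replicate)

lemma Pword_NF: "Pword h m j \<in> NF"
  unfolding Pword_def using P_exps_nonempty_sorted by (intro exp_word_NF) auto

lemma prec_Qword_Pword:
  assumes k: "m \<le> k" "k \<le> h"
  shows "prec (Qword h k) (Pword h m j)"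
proof -
  have "P_exps h m j = rev [k - 1..<h] @ rev [m - 1..<k - 1] @ replicate j (m - 1)"
    using rev_upt_split[of "m - 1" "k - 1" h] k by (simp add: P_exps_def)
  then have "lexle (\<le>) (rev [k - 1..<h]) (P_exps h m j)"
    by (simp only: lexle_nat_append)
  then show ?thesis
    unfolding Qword_def Pword_def
    using prec_exp_word[of "rev [k - 1..<h]" "P_exps h m j"] P_exps_nonempty_sorted k m
    by (simp add: sorted_wrt_rev)
qed

lemma pless_Pword_less:
  assumes "j < j'"
  shows "pless prec (Pword h m j) (Pword h m j')"
proof -
  obtain d where d: "j' = j + Suc d" using assms less_iff_Suc_add by auto
  show ?thesis
    using pless_exp_word[of "P_exps h m j" "P_exps h m j'"] P_exps_nonempty_sorted[of j] P_exps_nonempty_sorted[of j']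
      lexle_nat_append[of "P_exps h m j" "replicate (Suc d) (m - 1)"]
      not_lexle_nat_append[of "replicate (Suc d) (m - 1)" "P_exps h m j"]
    unfolding Pword_def d P_exps_add by simp
qed

lemma pless_Pword_Kw:
  assumes k: "m \<le> k" "k \<le> h"
  shows "pless prec (Pword h m j) (Kw h k)"
proof -
  have "P_exps h m j = rev [k..<h] @ (k - 1) # rev [m - 1..<k - 1] @ replicate j (m - 1)"
    using rev_upt_split[of "m - 1" "k - 1" h] rev_upt_split[of "k - 1" k h] k m
    by (simp add: P_exps_def upt_rec)
  then have "lexle (\<le>) (P_exps h m j) (rev [k..<h] @ [k]) \<and>
      \<not> lexle (\<le>) (rev [k..<h] @ [k]) (P_exps h m j)"
    using lexle_nat_less[of "k - 1" k "rev [k..<h]"] k m by simp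
  then show ?thesis
    unfolding Pword_def Kw_eq_exp_word
    using pless_exp_word[of "P_exps h m j" "rev [k..<h] @ [k]"] P_exps_nonempty_sorted[of j]
    by (simp add: sorted_wrt_append sorted_wrt_rev)
qed

end

definition Apiece :: "nat \<Rightarrow> nat \<Rightarrow> nat \<Rightarrow> nat \<Rightarrow> nat list" where
  "Apiece h m j k = Pword h m j @ 1 # Qword h k"

lemma set_Apiece: "set (Apiece h m j k) \<subseteq> {1, 2, 3}"
  using set_Pword[of h m j] set_Qword[of h k] by (auto simp: Apiece_def)

lemma splitn_1_Apiece: "splitn 1 (Apiece h m j k) = [Pword h m j, Qword h k]"
proof -
  have "1 \<notin> set (Pword h m j)" "1 \<notin> set (Qword h k)"
    using set_Pword[of h m j] set_Qword[of h k] by auto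
  then show ?thesis by (simp add: Apiece_def splitn_append_sep splitn_no_sep)
qed

lemma splitn_1_Apiece_snoc_3:
  assumes "1 \<le> k" "k \<le> h"
  shows "splitn 1 (Apiece h m j k @ [3]) = [Pword h m j, Kw h k]"
proof -
  have "1 \<notin> set (Pword h m j)" "1 \<notin> set (Kw h k)"
    using set_Pword[of h m j] set_Kw[of h k] by auto
  then show ?thesis
    using Qword_snoc_3[OF assms] by (simp add: Apiece_def splitn_append_sep splitn_no_sep)
qed

context
  fixes h m :: nat
  assumes m: "1 \<le> m" "m \<le> h"
begin

lemma prec_desc_splitn_1_Apiece:
  "m \<le> k \<Longrightarrow> k \<le> h \<Longrightarrow> prec_desc (splitn 1 (Apiece h m j k))"
  unfolding splitn_1_Apiece using prec_Qword_Pword[OF m] by (simp add: prec_desc_def)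

lemma Apiece_NF:
  assumes "m \<le> k" "k \<le> h"
  shows "Apiece h m j k \<in> NF"
proof (rule NF_intro)
  show "Min (set (Apiece h m j k)) = 1"
    using set_Apiece[of h m j k] by (intro Min_eqI) (auto simp: Apiece_def)
  show "prec_desc (splitn 1 (Apiece h m j k))"
    by (rule prec_desc_splitn_1_Apiece[OF assms])
  have "Qword h k \<in> NF"
    unfolding Qword_def using assms m by (intro exp_word_NF) (auto simp: sorted_wrt_rev)
  then show "\<forall>p\<in>set (splitn 1 (Apiece h m j k)). p \<in> NF"
    using Pword_NF[OF m] by (simp add: splitn_1_Apiece[simplified])
qed (simp add: Apiece_def)

lemma prec_Apiece_less:
  assumes "m \<le> k" "k \<le> h" "m \<le> k'" "k' \<le> h" "j < j'"
  shows "prec (Apiece h m j k) (Apiece h m j' k')"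
proof -
  have "\<forall>y\<in>set (Apiece h m j k @ Apiece h m j' k'). 1 \<le> y"
    using set_Apiece[of h m j k] set_Apiece[of h m j' k'] by auto
  then show ?thesis
    using prec_splitn_desc prec_desc_splitn_1_Apiece assms pless_Pword_less[OF m assms(5)]
    by (simp add: splitn_1_Apiece[simplified])
qed

lemma lexmax_splitn_1_Apiece_snoc_3:
  assumes "m \<le> k" "k \<le> h"
  shows "lexmax prec (splitn 1 (Apiece h m i k @ [3])) = [Kw h k]"
  using lexmax_snoc[of "[Pword h m i]" "Kw h k"] pless_Pword_Kw[OF m assms] assms m
  by (simp add: splitn_1_Apiece_snoc_3[simplified])

lemma pless_Apiece_Apiece_snoc_3:
  assumes "m \<le> k" "k \<le> h" "m \<le> k'" "k' \<le> h"
  shows "pless prec (Apiece h m j k') (Apiece h m i k @ [3])"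
proof -
  have ge: "\<forall>y\<in>set (Apiece h m j k' @ (Apiece h m i k @ [3])). 1 \<le> y"
    "\<forall>y\<in>set ((Apiece h m i k @ [3]) @ Apiece h m j k'). 1 \<le> y"
    using set_Apiece[of h m j k'] set_Apiece[of h m i k] by auto
  have desc: "list_all2 (pequiv prec) (lexmax prec (splitn 1 (Apiece h m j k'))) [Pword h m j, Qword h k']"
    using lexmax_prec_desc[OF prec_desc_splitn_1_Apiece[OF assms(3,4)]] by (simp add: splitn_1_Apiece[simplified])
  have refl: "list_all2 (pequiv prec) [Kw h k] [Kw h k]" by (simp add: pequiv_def prec_refl)
  have "prec (Apiece h m j k') (Apiece h m i k @ [3]) = lexle prec [Pword h m j, Qword h k'] [Kw h k]"
    using prec_splitn[OF ge(1)] lexmax_splitn_1_Apiece_snoc_3[OF assms(1,2)]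
      lexle_prec_cong[OF desc refl] by (simp add: pequiv_def prec_refl)
  moreover have "prec (Apiece h m i k @ [3]) (Apiece h m j k') = lexle prec [Kw h k] [Pword h m j, Qword h k']"
    using prec_splitn[OF ge(2)] lexmax_splitn_1_Apiece_snoc_3[OF assms(1,2)]
      lexle_prec_cong[OF refl desc] by (simp add: pequiv_def prec_refl)
  ultimately show ?thesis
    using pless_Pword_Kw[OF m assms(1,2)] by (simp add: pless_def pequiv_def)
qed

lemma wequiv_Kw_Apiece_snoc_3:
  assumes "m \<le> k" "k \<le> h"
  shows "wequiv (Kw h k) (Apiece h m i k @ [3])"
proof -
  have "Apiece h m i k @ [3] = joinw 1 ([Pword h m i] @ [Kw h k])"
    using Qword_snoc_3[of k h] assms m by (simp add: Apiece_def)
  moreover have "wequiv (Kw h k) (joinw 1 ([Pword h m i] @ [Kw h k]))"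
    using set_Pword[of h m i] set_Kw[of h k] pless_Pword_Kw[OF m assms]
    by (intro wequiv_joinw_snoc) (auto simp: wequiv_def prec_refl)
  ultimately show ?thesis by simp
qed

end

section \<open>The word realising the prescribed vector\<close>

definition Aword :: "nat \<Rightarrow> nat \<Rightarrow> (nat \<Rightarrow> nat) \<Rightarrow> nat \<Rightarrow> nat list" where
  "Aword h m k r = joinw 0 (map (\<lambda>i. Apiece h m i (k i)) (rev [1..<Suc r]))"

lemma set_Aword: "set (Aword h m k r) \<subseteq> {0, 1, 2, 3}"
  using set_joinw[of 0 "map (\<lambda>i. Apiece h m i (k i)) (rev [1..<Suc r])"] set_Apiece
  unfolding Aword_def by fastforce

lemma take_rev_upt:
  assumes "1 \<le> i" "i \<le> r"
  shows "take (r - i + 1) (rev [1..<Suc r]) = rev [Suc i..<Suc r] @ [i]"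
proof -
  have "rev [1..<Suc r] = rev [i..<Suc r] @ rev [1..<i]" using assms by (intro rev_upt_split) auto
  moreover have "rev [i..<Suc r] = rev [Suc i..<Suc r] @ [i]" using assms by (simp add: upt_conv_Cons)
  ultimately show ?thesis using assms by simp
qed

context
  fixes h m r :: nat and k :: "nat \<Rightarrow> nat"
  assumes m: "1 \<le> m" "m \<le> h" and r: "1 \<le> r"
    and k: "\<forall>i\<in>{1..r}. m \<le> k i \<and> k i \<le> h"
begin

lemma splitn_0_Aword: "splitn 0 (Aword h m k r) = map (\<lambda>i. Apiece h m i (k i)) (rev [1..<Suc r])"
  unfolding Aword_def using r set_Apiece by (intro splitn_joinw) fastforce+

lemma Aword_NF: "Aword h m k r \<in> NF"
  unfolding Aword_def
proof (rule joinw_NF)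
  show "map (\<lambda>i. Apiece h m i (k i)) (rev [1..<Suc r]) \<noteq> []" using r by simp
  show "\<forall>p\<in>set (map (\<lambda>i. Apiece h m i (k i)) (rev [1..<Suc r])). p \<in> NF \<and> (\<forall>y\<in>set p. 0 < y)"
    using Apiece_NF[OF m] set_Apiece k by fastforce
  have "sorted_wrt (\<lambda>i j. prec (Apiece h m i (k i)) (Apiece h m j (k j))) [1..<Suc r]"
    by (rule sorted_wrt_mono_rel[OF _ sorted_wrt_upt]) (use prec_Apiece_less[OF m] k in auto)
  then show "prec_desc (map (\<lambda>i. Apiece h m i (k i)) (rev [1..<Suc r]))"
    unfolding prec_desc_def sorted_wrt_map sorted_wrt_rev .
qed

lemma diamond_3_Aword_prefix:
  assumes i: "1 \<le> i" "i \<le> r"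
  shows "diamond 3 (joinw 0 (take (r - i + 1) (splitn 0 (Aword h m k r)))) = Kw h (k i)"
proof -
  define f where "f i = Apiece h m i (k i)" for i
  define xs where "xs = map f (rev [Suc i..<Suc r])"
  have ki: "m \<le> k i" "k i \<le> h" using k i by auto
  have "take (r - i + 1) (splitn 0 (Aword h m k r)) = xs @ [f i]"
    unfolding splitn_0_Aword xs_def f_def take_map take_rev_upt[OF i] by simp
  moreover have "wequiv (Kw h (k i)) (joinw 0 (xs @ [f i @ [3]]))"
  proof (rule wequiv_joinw_snoc)
    show "\<forall>p\<in>set (xs @ [f i @ [3]]). 0 \<notin> set p"
      using set_Apiece unfolding xs_def f_def by fastforce
    show "\<forall>a\<in>set (Kw h (k i) @ joinw 0 (xs @ [f i @ [3]])). 0 \<le> a" by simp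
    show "0 \<notin> set (Kw h (k i))" using set_Kw by fastforce
    show "\<forall>x\<in>set xs. pless prec x (f i @ [3])"
      using pless_Apiece_Apiece_snoc_3[OF m ki] k i unfolding xs_def f_def by auto
    show "wequiv (Kw h (k i)) (f i @ [3])"
      unfolding f_def by (rule wequiv_Kw_Apiece_snoc_3[OF m ki])
  qed
  ultimately show ?thesis
    using diamond_eqI[OF Kw_NF] joinw_snoc_append by metis
qed

lemma uvec_Aword: "uvec (Aword h m k r) = map (\<lambda>i. Kw h (k i)) [1..<r + 1]"
proof -
  have len: "length (splitn 0 (Aword h m k r)) = r" by (simp add: splitn_0_Aword)
  show ?thesis
    unfolding uvec_def Let_def len
  proof (rule map_cong[OF refl])
    fix i assume "i \<in> set [1..<r + 1]"
    then show "diamond 3 (joinw 0 (take (r - i + 1) (splitn 0 (Aword h m k r)))) = Kw h (k i)"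
      by (intro diamond_3_Aword_prefix) auto
  qed
qed

end

theorem lemma7:
  fixes h r :: nat and k :: "nat \<Rightarrow> nat"
  assumes "h \<ge> 1" and "r \<ge> 1"
    and "\<forall>i \<in> {1..r}. 1 \<le> k i \<and> k i \<le> h"
  shows "\<exists>A \<in> W3N. uvec A = map (\<lambda>i. Kw h (k i)) [1..<r+1]"
proof -
  define m where "m = Min (k ` {1..r})"
  have "m \<in> k ` {1..r}" using assms(2) unfolding m_def by (intro Min_in) auto
  then have m: "1 \<le> m" "m \<le> h" using assms(3) by auto
  have k: "\<forall>i\<in>{1..r}. m \<le> k i \<and> k i \<le> h" using assms(3) unfolding m_def by simp
  have "Aword h m k r \<in> W3N"
    using Aword_NF[OF m assms(2) k] set_Aword[of h m k r] by (auto simp: W3N_def W3_def)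
  then show ?thesis using uvec_Aword[OF m assms(2) k] by blast
qed

end
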